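(* Let $X\in\mathbf{R}^{n\times p}$ with rows $x_1,\dots,x_n\in\mathbf{R}^p$, let $P=\operatorname{conv}\{x_1,\dots,x_n\}$, and let $h_1,\dots,h_k$ be the extreme points of $P$. For each $i$ let $\omega_i=\Pr(z\in N_P(h_i))$, $z\sim\mathcal{N}(0,I_p)$, be the solid angle of the normal cone of $P$ at $h_i$. Consider the following procedure (the proto-algorithm): generate a $p\times m$ random matrix $G$ with independent standard normal entries, form $XG$, let $I_{\max}$ and $I_{\min}$ be the sets of row indices attaining the maximum and the minimum, respectively, in each column of $XG$, and return the rows of $X$ indexed by $I_{\max}\cup I_{\min}$. Let $\delta\in(0,1)$. If $$m>\kappa\log\left(\frac{k}{\delta}\right),\qquad \kappa=\frac{1}{\log\left(\frac{1}{\max_i(1-2\omega_i)}\right)},$$ then with probability at least $1-\delta$ the returned rows include all $k$ extreme points $h_1,\dots,h_k$.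
   Context: For a convex set $C\subset\mathbf{R}^p$ and $x\in C$, the normal cone is $N_C(x)=\{w\in\mathbf{R}^p : w^T(y-x)\le 0\text{ for all }y\in C\}$. The solid angle of a cone $K\subset\mathbf{R}^p$ (full-dimensional) is $\omega(K)=\Pr(z\in K)$ for $z\sim\mathcal{N}(0,I_p)$. *)

theory Defs
  imports "HOL-Probability.Probability"
begin

definition normal_cone :: "'a::euclidean_space set \<Rightarrow> 'a \<Rightarrow> 'a set" where
  "normal_cone C x = {w. \<forall>y\<in>C. w \<bullet> (y - x) \<le> 0}"

definition std_gaussian :: "'a::euclidean_space measure" where
  "std_gaussian = density lborel (\<lambda>z. \<Prod>b\<in>Basis. ennreal (std_normal_density (z \<bullet> b)))"

definition solid_angle :: "'a::euclidean_space set \<Rightarrow> real" where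
  "solid_angle K = measure std_gaussian K"

text \<open>Output of the proto-algorithm: the rows x_i (i<n) that attain the maximum or the
  minimum of the column j of XG, for some column j<m; G j is the j-th column of G.\<close>
definition proto_output :: "nat \<Rightarrow> (nat \<Rightarrow> 'a::euclidean_space) \<Rightarrow> nat \<Rightarrow> (nat \<Rightarrow> 'a) \<Rightarrow> 'a set" where
  "proto_output n x m G =
     {x i | i j. i < n \<and> j < m \<and>
        (x i \<bullet> G j = Max ((\<lambda>l. x l \<bullet> G j) ` {..<n}) \<or>
         x i \<bullet> G j = Min ((\<lambda>l. x l \<bullet> G j) ` {..<n}))}"

end

theory Submission
  imports Defs
begin

text \<open>A column g of G selects the extreme point h as a maximiser if g lies in the normal
  cone N of P at h, and as a minimiser if g lies in -N. Unless P is the single point h, the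
  cones N and -N meet only inside a hyperplane, a Gaussian null set, so by symmetry of the
  Gaussian a column misses h with probability 1 - 2\<omega>(N). Independence of the m columns and
  a union bound over the k extreme points bound the failure probability by
  k (max_i (1 - 2\<omega>_i))^m, which is at most \<delta> for the given m.\<close>

lemma sets_std_gaussian [simp, measurable_cong]: "sets std_gaussian = sets borel"
  by (simp add: std_gaussian_def)

lemma space_std_gaussian [simp]: "space std_gaussian = UNIV"
  by (simp add: std_gaussian_def)

interpretation std_gaussian: prob_space "std_gaussian :: 'a::euclidean_space measure"
proof
  have "emeasure std_gaussian (space std_gaussian :: 'a set)
      = (\<integral>\<^sup>+z. (\<Prod>b\<in>Basis. ennreal (std_normal_density (z \<bullet> b))) \<partial>(lborel::'a measure))"
    by (simp add: std_gaussian_def emeasure_density)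
  also have "\<dots> = (\<Prod>b\<in>(Basis::'a set). \<integral>\<^sup>+t. ennreal (std_normal_density t) \<partial>lborel)"
    by (rule nn_integral_lborel_prod) auto
  also have "(\<integral>\<^sup>+t. ennreal (std_normal_density t) \<partial>lborel) = 1"
    using prob_space.emeasure_space_1[OF prob_space_normal_density[of 1 0]]
    by (simp add: emeasure_density)
  finally show "emeasure std_gaussian (space std_gaussian :: 'a set) = 1" by simp
qed

lemma null_sets_std_gaussian:
  "null_sets std_gaussian = null_sets (lborel :: 'a::euclidean_space measure)"
proof -
  have density_nonzero: "(\<Prod>b\<in>Basis. ennreal (std_normal_density (z \<bullet> b))) \<noteq> 0" for z :: 'a
  proof -
    have "0 < (\<Prod>b\<in>Basis. std_normal_density (z \<bullet> b))"
      by (intro prod_pos normal_density_pos) simp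
    then show ?thesis by (simp add: prod_ennreal normal_density_nonneg del: prod_zero_iff)
  qed
  have "A \<in> null_sets std_gaussian \<longleftrightarrow> A \<in> null_sets lborel" for A :: "'a set"
  proof -
    have "(AE z in lborel. z \<in> A \<longrightarrow> (\<Prod>b\<in>Basis. ennreal (std_normal_density (z \<bullet> b))) = 0)
          \<longleftrightarrow> (AE z in lborel. z \<notin> A)"
      using density_nonzero by (intro AE_cong) auto
    then show ?thesis
      unfolding std_gaussian_def
      by (subst null_sets_density_iff) (auto simp: AE_iff_measurable[OF _ refl] null_sets_def)
  qed
  then show ?thesis by blast
qed

lemma std_gaussian_hyperplane:
  fixes a :: "'a::euclidean_space"
  assumes "a \<noteq> 0"
  shows "{w. a \<bullet> w = 0} \<in> null_sets std_gaussian"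
proof -
  have "{w. a \<bullet> w = 0} \<in> null_sets lebesgue"
    using negligible_hyperplane[of a 0] assms by (simp add: negligible_iff_null_sets)
  then show ?thesis
    by (simp add: null_sets_std_gaussian null_sets_completion_iff)
qed

lemma measure_std_gaussian_pos_if_ball_subset:
  fixes K :: "'a::euclidean_space set"
  assumes "0 < r" "ball c r \<subseteq> K" "K \<in> sets borel"
  shows "0 < measure std_gaussian K"
proof -
  have "ball c r \<notin> null_sets lborel"
    using content_ball_pos[OF assms(1), of c] by (auto simp: null_sets_def measure_def)
  then have "K \<notin> null_sets std_gaussian"
    using assms(2) null_sets_subset[of K lborel "ball c r"] by (auto simp: null_sets_std_gaussian)
  then show ?thesis
    using assms(3) by (simp add: null_sets_def std_gaussian.emeasure_eq_measure zero_less_measure_iff)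
qed

lemma std_gaussian_uminus:
  fixes A :: "'a::euclidean_space set"
  assumes [measurable]: "A \<in> sets borel"
  shows "measure std_gaussian (uminus ` A) = measure std_gaussian A"
proof -
  define f :: "'a \<Rightarrow> ennreal" where "f z = (\<Prod>b\<in>Basis. ennreal (std_normal_density (z \<bullet> b)))" for z
  have [measurable]: "f \<in> borel_measurable borel"
    unfolding f_def by measurable
  have neg_image: "uminus ` A = {z. - z \<in> A}" by (force simp: image_iff)
  have [measurable]: "{z. - z \<in> A} \<in> sets (borel :: 'a measure)" by measurable
  have lborel_uminus: "lborel = distr lborel borel (uminus :: 'a \<Rightarrow> 'a)"
    using lborel_affine[of "-1" "0::'a"] by (simp add: density_1)
  have "emeasure std_gaussian (uminus ` A) = (\<integral>\<^sup>+z. f z * indicator {z. - z \<in> A} z \<partial>lborel)"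
    by (simp add: neg_image std_gaussian_def f_def emeasure_density)
  also have "\<dots> = (\<integral>\<^sup>+z. f z * indicator {z. - z \<in> A} z \<partial>distr lborel borel uminus)"
    by (simp flip: lborel_uminus)
  also have "\<dots> = (\<integral>\<^sup>+z. f z * indicator A z \<partial>lborel)"
    by (subst nn_integral_distr) (auto simp: f_def normal_density_def indicator_def)
  also have "\<dots> = emeasure std_gaussian A"
    by (simp add: std_gaussian_def f_def emeasure_density)
  finally show ?thesis by (simp add: std_gaussian.emeasure_eq_measure)
qed

lemma (in prob_space) measure_PiM_Collect_iid:
  assumes "finite I" "C \<in> sets M"
  shows "measure (PiM I (\<lambda>_. M)) {G \<in> space (PiM I (\<lambda>_. M)). \<forall>i\<in>I. G i \<in> C}
         = measure M C ^ card I"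
proof -
  have power: "emeasure M C ^ card I = ennreal (measure M C ^ card I)"
    by (simp add: emeasure_eq_measure ennreal_power)
  interpret product_prob_space "\<lambda>_. M" I
    by unfold_locales
  have "emeasure (PiM I (\<lambda>_. M)) {G \<in> space (PiM I (\<lambda>_. M)). \<forall>i\<in>I. G i \<in> C}
        = (\<Prod>i\<in>I. emeasure M C)"
    using assms by (intro emeasure_PiM_Collect) auto
  then show ?thesis
    by (simp add: P.emeasure_eq_measure power)
qed

lemma measure_std_gaussian_outside_symmetric:
  fixes K :: "'a::euclidean_space set"
  assumes [measurable]: "K \<in> sets borel" and "a \<noteq> 0" and "K \<inter> uminus ` K \<subseteq> {w. a \<bullet> w = 0}"
  shows "measure std_gaussian (- (K \<union> uminus ` K)) = 1 - 2 * measure std_gaussian K"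
proof -
  have "uminus ` K = {z. - z \<in> K}" by (force simp: image_iff)
  then have [measurable]: "uminus ` K \<in> sets borel" by simp
  have "K \<inter> uminus ` K \<in> null_sets std_gaussian"
    using null_sets_subset[OF std_gaussian_hyperplane[OF assms(2)]] assms(3) by auto
  then have "measure std_gaussian (K \<union> uminus ` K)
      = measure std_gaussian K + measure std_gaussian (uminus ` K)"
    by (subst measure_Un3)
      (auto simp: std_gaussian.emeasure_eq_measure std_gaussian.fmeasurable_eq_sets null_sets_def)
  also have "\<dots> = 2 * measure std_gaussian K"
    by (simp add: std_gaussian_uminus)
  finally show ?thesis
    using std_gaussian.prob_compl[of "K \<union> uminus ` K"] by (simp add: Compl_eq_Diff_UNIV)
qed

lemma normal_cone_closed: "closed (normal_cone C x)"
proof -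
  have "normal_cone C x = (\<Inter>y\<in>C. {w. (y - x) \<bullet> w \<le> 0})"
    by (auto simp: normal_cone_def inner_commute)
  then show ?thesis by (auto intro!: closed_INT closed_halfspace_le)
qed

lemma normal_cone_borel [measurable]: "normal_cone C x \<in> sets borel"
  by (rule borel_closed[OF normal_cone_closed])

lemma normal_cone_convex_hull:
  fixes S :: "'a::euclidean_space set"
  shows "normal_cone (convex hull S) h = {w. \<forall>y\<in>S. w \<bullet> (y - h) \<le> 0}"
proof
  show "normal_cone (convex hull S) h \<subseteq> {w. \<forall>y\<in>S. w \<bullet> (y - h) \<le> 0}"
    using hull_subset[of S convex] by (auto simp: normal_cone_def)
  show "{w. \<forall>y\<in>S. w \<bullet> (y - h) \<le> 0} \<subseteq> normal_cone (convex hull S) h"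
  proof
    fix w assume "w \<in> {w. \<forall>y\<in>S. w \<bullet> (y - h) \<le> 0}"
    then have "S \<subseteq> {y. w \<bullet> y \<le> w \<bullet> h}" by (auto simp: inner_diff_right)
    then have "convex hull S \<subseteq> {y. w \<bullet> y \<le> w \<bullet> h}"
      by (metis hull_minimal convex_halfspace_le)
    then show "w \<in> normal_cone (convex hull S) h" by (auto simp: normal_cone_def inner_diff_right)
  qed
qed

lemma normal_cone_inter_uminus_subset:
  fixes S :: "'a::euclidean_space set"
  assumes "y \<in> S"
  shows "normal_cone (convex hull S) h \<inter> uminus ` normal_cone (convex hull S) h
         \<subseteq> {w. (y - h) \<bullet> w = 0}"
  using assms by (force simp: normal_cone_convex_hull inner_commute)

text \<open>Separating h strictly from the convex hull of the other points gives a direction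
  -a that lies in the open set of strict normals, which is contained in the normal cone.\<close>
lemma extreme_point_normal_cone_ball:
  fixes S :: "'a::euclidean_space set"
  assumes "finite S" "h extreme_point_of (convex hull S)"
  obtains c r where "0 < r" "ball c r \<subseteq> normal_cone (convex hull S) h"
proof -
  define T where "T = S - {h}"
  have "h \<notin> convex hull T"
  proof -
    have "convex hull T \<subseteq> convex hull S - {h}"
      using extreme_point_of_stillconvex[of "convex hull S" h] assms(2) hull_subset[of S convex]
      by (intro hull_minimal) (auto simp: T_def)
    then show ?thesis by blast
  qed
  moreover have "closed (convex hull T)"
    using assms(1) by (simp add: T_def compact_imp_closed compact_convex_hull finite_imp_compact)
  ultimately obtain a b where ab: "a \<bullet> h < b" "\<forall>y\<in>convex hull T. b < a \<bullet> y"
    using separating_hyperplane_closed_point by blast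
  define U where "U = (\<Inter>y\<in>T. {w. (y - h) \<bullet> w < 0})"
  have "open U"
    using assms(1) by (auto simp: U_def T_def intro!: open_INT open_halfspace_lt)
  moreover have "- a \<in> U"
    unfolding U_def
  proof
    fix y assume "y \<in> T"
    then have "b < a \<bullet> y" using ab(2) hull_subset[of T convex] by auto
    with ab(1) show "- a \<in> {w. (y - h) \<bullet> w < 0}" by (simp add: inner_diff_right inner_commute)
  qed
  ultimately obtain r where "0 < r" "ball (- a) r \<subseteq> U"
    by (meson openE)
  moreover have "U \<subseteq> normal_cone (convex hull S) h"
    by (force simp: normal_cone_convex_hull U_def T_def inner_commute)
  ultimately show ?thesis
    using that by blast
qed

lemma solid_angle_normal_cone_pos:
  fixes S :: "'a::euclidean_space set"
  assumes "finite S" "h extreme_point_of (convex hull S)"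
  shows "0 < solid_angle (normal_cone (convex hull S) h)"
proof -
  obtain c r where "0 < r" "ball c r \<subseteq> normal_cone (convex hull S) h"
    using extreme_point_normal_cone_ball[OF assms] .
  then show ?thesis
    unfolding solid_angle_def by (intro measure_std_gaussian_pos_if_ball_subset) auto
qed

text \<open>If S \<subseteq> {h} the normal cone is everything and the bound is the trivial 0;
  otherwise N and -N overlap only in a hyperplane and the bound is an equality.\<close>
lemma measure_outside_normal_cone_le:
  fixes S :: "'a::euclidean_space set" and h :: 'a
  defines "N \<equiv> normal_cone (convex hull S) h"
  shows "measure std_gaussian (- (N \<union> uminus ` N)) \<le> max 0 (1 - 2 * solid_angle N)"
proof (cases "S \<subseteq> {h}")
  case True
  then have "N = UNIV" by (auto simp: N_def normal_cone_convex_hull)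
  then show ?thesis by simp
next
  case False
  then obtain y where "y \<in> S" "y \<noteq> h" by blast
  then have "measure std_gaussian (- (N \<union> uminus ` N)) = 1 - 2 * solid_angle N"
    unfolding N_def solid_angle_def
    by (intro measure_std_gaussian_outside_symmetric[where a = "y - h"]
        normal_cone_inter_uminus_subset) auto
  then show ?thesis by simp
qed

lemma Max_inner_eq_if_normal_cone:
  fixes x :: "nat \<Rightarrow> 'a::euclidean_space"
  assumes "i < n" "w \<in> normal_cone (convex hull (x ` {..<n})) (x i)"
  shows "Max ((\<lambda>l. x l \<bullet> w) ` {..<n}) = x i \<bullet> w"
  using assms by (intro Max_eqI) (auto simp: normal_cone_convex_hull inner_diff_right inner_commute)

lemma Min_inner_eq_if_normal_cone:
  fixes x :: "nat \<Rightarrow> 'a::euclidean_space"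
  assumes "i < n" "- w \<in> normal_cone (convex hull (x ` {..<n})) (x i)"
  shows "Min ((\<lambda>l. x l \<bullet> w) ` {..<n}) = x i \<bullet> w"
  using assms by (intro Min_eqI) (auto simp: normal_cone_convex_hull inner_diff_right inner_commute)

lemma mem_proto_output_if_normal_cone:
  fixes x :: "nat \<Rightarrow> 'a::euclidean_space"
  assumes "i < n" "j < m"
    and "G j \<in> normal_cone (convex hull (x ` {..<n})) (x i)
               \<union> uminus ` normal_cone (convex hull (x ` {..<n})) (x i)"
  shows "x i \<in> proto_output n x m G"
proof -
  from assms(3) have "x i \<bullet> G j = Max ((\<lambda>l. x l \<bullet> G j) ` {..<n})
                    \<or> x i \<bullet> G j = Min ((\<lambda>l. x l \<bullet> G j) ` {..<n})"
  proof
    assume "G j \<in> normal_cone (convex hull (x ` {..<n})) (x i)"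
    then show ?thesis by (metis Max_inner_eq_if_normal_cone assms(1))
  next
    assume "G j \<in> uminus ` normal_cone (convex hull (x ` {..<n})) (x i)"
    then have "- G j \<in> normal_cone (convex hull (x ` {..<n})) (x i)" by auto
    then show ?thesis by (metis Min_inner_eq_if_normal_cone assms(1))
  qed
  then show ?thesis
    unfolding proto_output_def using assms(1,2) by blast
qed

lemma proto_output_mem_measurable [measurable]:
  fixes x :: "nat \<Rightarrow> 'a::euclidean_space"
  shows "{G \<in> space (PiM {..<m} (\<lambda>_. std_gaussian)). h \<in> proto_output n x m G}
         \<in> sets (PiM {..<m} (\<lambda>_. std_gaussian))"
proof -
  have "{G \<in> space (PiM {..<m} (\<lambda>_. std_gaussian)). h \<in> proto_output n x m G}
      = {G \<in> space (PiM {..<m} (\<lambda>_. std_gaussian)). \<exists>i\<in>{..<n}. \<exists>j\<in>{..<m}. h = x i \<and>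
          (x i \<bullet> G j = Max ((\<lambda>l. x l \<bullet> G j) ` {..<n}) \<or> x i \<bullet> G j = Min ((\<lambda>l. x l \<bullet> G j) ` {..<n}))}"
    unfolding proto_output_def by blast
  also have "\<dots> \<in> sets (PiM {..<m} (\<lambda>_. std_gaussian))"
    by measurable
  finally show ?thesis .
qed

lemma prob_proto_output_misses_extreme_point:
  fixes x :: "nat \<Rightarrow> 'a::euclidean_space" and n :: nat and h :: 'a
  defines "N \<equiv> normal_cone (convex hull (x ` {..<n})) h"
  assumes "h extreme_point_of (convex hull (x ` {..<n}))"
  shows "measure (PiM {..<m} (\<lambda>_. std_gaussian))
           {G \<in> space (PiM {..<m} (\<lambda>_. std_gaussian)). h \<notin> proto_output n x m G}
         \<le> max 0 (1 - 2 * solid_angle N) ^ m"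
proof -
  interpret P: prob_space "PiM {..<m} (\<lambda>_. std_gaussian :: 'a measure)"
    by (rule prob_space_PiM) (rule std_gaussian.prob_space_axioms)
  define C where "C = - (N \<union> uminus ` N)"
  have [measurable]: "C \<in> sets borel"
  proof -
    have "uminus ` N = {z. - z \<in> N}" by (force simp: image_iff)
    then show ?thesis by (simp add: C_def N_def)
  qed
  obtain i where "i < n" "h = x i"
    using extreme_point_of_convex_hull[OF assms(2)] by blast
  then have "{G \<in> space (PiM {..<m} (\<lambda>_. std_gaussian)). h \<notin> proto_output n x m G}
      \<subseteq> {G \<in> space (PiM {..<m} (\<lambda>_. std_gaussian)). \<forall>j\<in>{..<m}. G j \<in> C}"
    using mem_proto_output_if_normal_cone[of i n _ m _ x] by (auto simp: C_def N_def)
  then have "measure (PiM {..<m} (\<lambda>_. std_gaussian))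
           {G \<in> space (PiM {..<m} (\<lambda>_. std_gaussian)). h \<notin> proto_output n x m G}
         \<le> measure (PiM {..<m} (\<lambda>_. std_gaussian))
             {G \<in> space (PiM {..<m} (\<lambda>_. std_gaussian)). \<forall>j\<in>{..<m}. G j \<in> C}"
    by (rule P.finite_measure_mono) measurable
  also have "\<dots> = measure std_gaussian C ^ m"
    using std_gaussian.measure_PiM_Collect_iid[of "{..<m}" C] by simp
  also have "\<dots> \<le> max 0 (1 - 2 * solid_angle N) ^ m"
    unfolding C_def N_def by (intro power_mono measure_outside_normal_cone_le) simp
  finally show ?thesis .
qed

lemma sum_max_power_le_if_exponent_gt:
  fixes q :: "'b \<Rightarrow> real" and \<delta> :: real and m :: nat
  assumes "finite E" "\<forall>h\<in>E. q h < 1" "0 < \<delta>" "0 < m"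
    and "real m > 1 / ln (1 / Max (q ` E)) * ln (real (card E) / \<delta>)"
  shows "(\<Sum>h\<in>E. max 0 (q h) ^ m) \<le> \<delta>"
proof (cases "E = {}")
  case True
  then show ?thesis using assms(3) by simp
next
  case False
  define Q where "Q = Max (q ` E)"
  have "Q < 1" using assms(1,2) False by (simp add: Q_def)
  have "(\<Sum>h\<in>E. max 0 (q h) ^ m) \<le> real (card E) * max 0 Q ^ m"
    using assms(1) by (intro sum_bounded_above power_mono max.mono) (auto simp: Q_def)
  also have "\<dots> \<le> \<delta>"
  proof (cases "Q \<le> 0")
    case True
    then show ?thesis using assms(3,4) by (simp add: zero_power)
  next
    case False
    have "ln (real (card E) / \<delta>) < real m * ln (1 / Q)"
      using assms(5) False \<open>Q < 1\<close> by (simp add: Q_def divide_less_eq mult.commute)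
    also have "\<dots> = ln ((1 / Q) ^ m)"
      using False by (simp add: ln_realpow)
    finally have "real (card E) / \<delta> < (1 / Q) ^ m"
      using False \<open>E \<noteq> {}\<close> assms(1,3) by (simp add: card_gt_0_iff)
    then show ?thesis
      using False assms(3) by (simp add: power_one_over field_simps)
  qed
  finally show ?thesis .
qed

theorem theorem1:
  fixes x :: "nat \<Rightarrow> 'a::euclidean_space" and n m :: nat and \<delta> :: real
  defines "P \<equiv> convex hull (x ` {..<n})"
  defines "E \<equiv> {h. h extreme_point_of P}"
  defines "k \<equiv> card E"
  defines "\<kappa> \<equiv> 1 / ln (1 / Max ((\<lambda>h. 1 - 2 * solid_angle (normal_cone P h)) ` E))"
  assumes "0 < \<delta>" and "\<delta> < 1"
  assumes "0 < m"
  assumes "real m > \<kappa> * ln (real k / \<delta>)"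
  shows "measure (PiM {..<m} (\<lambda>_. std_gaussian))
           {G \<in> space (PiM {..<m} (\<lambda>_. std_gaussian)). E \<subseteq> proto_output n x m G}
         \<ge> 1 - \<delta>"
proof -
  define M where "M = PiM {..<m} (\<lambda>_. std_gaussian :: 'a measure)"
  interpret prob_space M
    unfolding M_def by (rule prob_space_PiM) (rule std_gaussian.prob_space_axioms)
  define Miss where "Miss h = {G \<in> space M. h \<notin> proto_output n x m G}" for h
  define q where "q h = 1 - 2 * solid_angle (normal_cone P h)" for h
  have "E \<subseteq> x ` {..<n}"
    using extreme_point_of_convex_hull by (auto simp: E_def P_def)
  then have "finite E"
    by (rule finite_subset) simp
  have Miss_sets: "Miss h \<in> sets M" for h
    unfolding Miss_def M_def by measurable
  have "{G \<in> space M. E \<subseteq> proto_output n x m G} = space M - (\<Union>h\<in>E. Miss h)"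
    by (auto simp: Miss_def)
  then have "measure M {G \<in> space M. E \<subseteq> proto_output n x m G}
      = 1 - measure M (\<Union>h\<in>E. Miss h)"
    using \<open>finite E\<close> Miss_sets by (simp add: prob_compl sets.finite_UN)
  moreover have "measure M (\<Union>h\<in>E. Miss h) \<le> (\<Sum>h\<in>E. measure M (Miss h))"
    using \<open>finite E\<close> Miss_sets by (intro finite_measure_subadditive_finite) auto
  moreover have "(\<Sum>h\<in>E. measure M (Miss h)) \<le> (\<Sum>h\<in>E. max 0 (q h) ^ m)"
    unfolding Miss_def M_def q_def E_def P_def
    by (intro sum_mono prob_proto_output_misses_extreme_point) simp
  moreover have "(\<Sum>h\<in>E. max 0 (q h) ^ m) \<le> \<delta>"
    using \<open>finite E\<close> assms(5,7,8) solid_angle_normal_cone_pos[of "x ` {..<n}"]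
    unfolding q_def k_def \<kappa>_def by (intro sum_max_power_le_if_exponent_gt) (auto simp: E_def P_def)
  ultimately show ?thesis
    unfolding M_def by linarith
qed

end
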